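(* Let $N,M,G,H$ be finitely generated groups and let $\alpha\colon N^{(G)}\to M^{(H)}$ and $\beta\colon G\to H$ be maps. Suppose there is $Q\ge0$ such that for all $c_1,c_2\in N^{(G)}$ with $\mathrm{supp}(c_1^{-1}c_2)\subset\{p\}$ for some $p\in G$, one has $\mathrm{supp}(\alpha(c_1)^{-1}\alpha(c_2))\subset B_H(\beta(p),Q)$. Then for every finite subset $A\subset G$ and every $c\in N^{(G)}$, $\alpha(c\,\mathcal L(A))\subset\alpha(c)\,\mathcal L(\beta(A)^{+Q})$.
   Context: Groups carry word metrics from finite generating sets; $B_H(x,r)$ is the closed ball. $N^{(G)}$ is the group of finitely supported maps $G\to N$ with pointwise multiplication; $\mathrm{supp}(c)=\{g:c(g)\ne1_N\}$. For $A\subset G$, $\mathcal L(A)$ is the subgroup of $N^{(G)}$ of colourings supported in $A$ (similarly in $M^{(H)}$). $A^{+Q}$ is the closed $Q$-neighbourhood of $A$. *)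

theory Defs
  imports Complex_Main "HOL-Algebra.Algebra"
begin

definition fin_gen_set :: "('a, 'b) monoid_scheme \<Rightarrow> 'a set \<Rightarrow> bool" where
  "fin_gen_set G S \<longleftrightarrow> finite S \<and> S \<subseteq> carrier G \<and> generate G S = carrier G"

definition finitely_generated :: "('a, 'b) monoid_scheme \<Rightarrow> bool" where
  "finitely_generated G \<longleftrightarrow> (\<exists>S. fin_gen_set G S)"

definition word_length :: "('a, 'b) monoid_scheme \<Rightarrow> 'a set \<Rightarrow> 'a \<Rightarrow> nat" where
  "word_length G S g = (LEAST n. \<exists>ws. length ws = n \<and>
      set ws \<subseteq> S \<union> m_inv G ` S \<and> foldr (\<otimes>\<^bsub>G\<^esub>) ws \<one>\<^bsub>G\<^esub> = g)"

definition word_dist :: "('a, 'b) monoid_scheme \<Rightarrow> 'a set \<Rightarrow> 'a \<Rightarrow> 'a \<Rightarrow> nat" where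
  "word_dist G S x y = word_length G S (inv\<^bsub>G\<^esub> x \<otimes>\<^bsub>G\<^esub> y)"

definition wball :: "('a, 'b) monoid_scheme \<Rightarrow> 'a set \<Rightarrow> 'a \<Rightarrow> real \<Rightarrow> 'a set" where
  "wball G S x r = {y \<in> carrier G. real (word_dist G S x y) \<le> r}"

definition wnbhd :: "('a, 'b) monoid_scheme \<Rightarrow> 'a set \<Rightarrow> 'a set \<Rightarrow> real \<Rightarrow> 'a set" where
  "wnbhd G S A r = {y \<in> carrier G. \<exists>a\<in>A. real (word_dist G S a y) \<le> r}"

definition csupp :: "('n, 'c) monoid_scheme \<Rightarrow> ('g, 'd) monoid_scheme \<Rightarrow> ('g \<Rightarrow> 'n) \<Rightarrow> 'g set" where
  "csupp N G c = {g \<in> carrier G. c g \<noteq> \<one>\<^bsub>N\<^esub>}"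

definition lamp :: "('n, 'c) monoid_scheme \<Rightarrow> ('g, 'd) monoid_scheme \<Rightarrow> ('g \<Rightarrow> 'n) monoid" where
  "lamp N G = \<lparr> carrier = {c. (\<forall>g\<in>carrier G. c g \<in> carrier N)
                         \<and> (\<forall>g. g \<notin> carrier G \<longrightarrow> c g = \<one>\<^bsub>N\<^esub>)
                         \<and> finite (csupp N G c)},
               monoid.mult = (\<lambda>c1 c2 g. c1 g \<otimes>\<^bsub>N\<^esub> c2 g),
               one = (\<lambda>g. \<one>\<^bsub>N\<^esub>) \<rparr>"

definition lampL :: "('n, 'c) monoid_scheme \<Rightarrow> ('g, 'd) monoid_scheme \<Rightarrow> 'g set \<Rightarrow> ('g \<Rightarrow> 'n) set" where
  "lampL N G A = {c \<in> carrier (lamp N G). csupp N G c \<subseteq> A}"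

end

theory Submission
  imports Defs
begin

text \<open>Since \<open>supp(c\<^sub>1\<^sup>-\<^sup>1 c\<^sub>2)\<close> is the set of sites where \<open>c\<^sub>1\<close> and \<open>c\<^sub>2\<close> disagree, the coset
  \<open>c \<L>(A)\<close> consists of the colourings that differ from \<open>c\<close> only inside \<open>A\<close>. Turn \<open>c\<close> into
  such a \<open>d\<close> one site \<open>p \<in> A\<close> at a time: each step changes \<open>\<alpha>\<close> only inside \<open>B(\<beta> p, Q)\<close>,
  so \<open>\<alpha> c\<close> and \<open>\<alpha> d\<close> disagree only inside \<open>\<beta>(A)\<^sup>+\<^sup>Q\<close>.\<close>

definition disagree :: "'a set \<Rightarrow> ('a \<Rightarrow> 'b) \<Rightarrow> ('a \<Rightarrow> 'b) \<Rightarrow> 'a set" where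
  "disagree D c d = {x \<in> D. c x \<noteq> d x}"

lemma disagree_trans: "disagree D f h \<subseteq> disagree D f g \<union> disagree D g h"
  by (auto simp: disagree_def)

lemma lamp_carrier_iff:
  "c \<in> carrier (lamp N G) \<longleftrightarrow> (\<forall>g\<in>carrier G. c g \<in> carrier N)
      \<and> (\<forall>g. g \<notin> carrier G \<longrightarrow> c g = \<one>\<^bsub>N\<^esub>) \<and> finite (csupp N G c)"
  by (simp add: lamp_def)

lemma lamp_mult: "c \<otimes>\<^bsub>lamp N G\<^esub> d = (\<lambda>g. c g \<otimes>\<^bsub>N\<^esub> d g)"
  by (simp add: lamp_def)

lemma lamp_one: "\<one>\<^bsub>lamp N G\<^esub> = (\<lambda>g. \<one>\<^bsub>N\<^esub>)"
  by (simp add: lamp_def)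

lemma lamp_eqI:
  assumes "c \<in> carrier (lamp N G)" "d \<in> carrier (lamp N G)"
    and "\<And>g. g \<in> carrier G \<Longrightarrow> c g = d g"
  shows "c = d"
  using assms by (intro ext) (metis lamp_carrier_iff)

lemma lamp_fun_upd_closed:
  assumes "c \<in> carrier (lamp N G)" "p \<in> carrier G" "a \<in> carrier N"
  shows "c(p := a) \<in> carrier (lamp N G)"
proof -
  have "csupp N G (c(p := a)) \<subseteq> insert p (csupp N G c)"
    by (auto simp: csupp_def)
  then show ?thesis
    using assms by (auto simp: lamp_carrier_iff intro: finite_subset)
qed

lemma lamp_group:
  assumes "group N" shows "group (lamp N G)"
proof -
  interpret N: group N by fact
  show ?thesis
  proof (rule groupI)
    fix c d assume c: "c \<in> carrier (lamp N G)" and d: "d \<in> carrier (lamp N G)"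
    have "csupp N G (c \<otimes>\<^bsub>lamp N G\<^esub> d) \<subseteq> csupp N G c \<union> csupp N G d"
      using c d by (auto simp: csupp_def lamp_mult lamp_carrier_iff)
    with c d show "c \<otimes>\<^bsub>lamp N G\<^esub> d \<in> carrier (lamp N G)"
      by (auto simp: lamp_carrier_iff lamp_mult intro: finite_subset)
  next
    show "\<one>\<^bsub>lamp N G\<^esub> \<in> carrier (lamp N G)"
      by (simp add: lamp_one lamp_carrier_iff csupp_def)
  next
    fix c d e
    assume "c \<in> carrier (lamp N G)" "d \<in> carrier (lamp N G)" "e \<in> carrier (lamp N G)"
    then show "c \<otimes>\<^bsub>lamp N G\<^esub> d \<otimes>\<^bsub>lamp N G\<^esub> e = c \<otimes>\<^bsub>lamp N G\<^esub> (d \<otimes>\<^bsub>lamp N G\<^esub> e)"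
      unfolding lamp_mult lamp_carrier_iff
      by (intro ext) (metis N.m_assoc N.one_closed)
  next
    fix c assume "c \<in> carrier (lamp N G)"
    then show "\<one>\<^bsub>lamp N G\<^esub> \<otimes>\<^bsub>lamp N G\<^esub> c = c"
      unfolding lamp_mult lamp_one lamp_carrier_iff
      by (intro ext) (metis N.l_one N.one_closed)
  next
    fix c assume c: "c \<in> carrier (lamp N G)"
    have "csupp N G (\<lambda>g. inv\<^bsub>N\<^esub> c g) = csupp N G c"
      using c by (auto simp: csupp_def lamp_carrier_iff N.inv_eq_1_iff)
    then have "(\<lambda>g. inv\<^bsub>N\<^esub> c g) \<in> carrier (lamp N G)"
      using c by (auto simp: lamp_carrier_iff)
    moreover have "(\<lambda>g. inv\<^bsub>N\<^esub> c g) \<otimes>\<^bsub>lamp N G\<^esub> c = \<one>\<^bsub>lamp N G\<^esub>"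
      using c unfolding lamp_mult lamp_one lamp_carrier_iff
      by (intro ext) (metis N.l_inv N.inv_one N.one_closed N.l_one)
    ultimately show "\<exists>d\<in>carrier (lamp N G). d \<otimes>\<^bsub>lamp N G\<^esub> c = \<one>\<^bsub>lamp N G\<^esub>"
      by blast
  qed
qed

lemma lamp_inv_apply:
  assumes "group N" "c \<in> carrier (lamp N G)" "g \<in> carrier G"
  shows "(inv\<^bsub>lamp N G\<^esub> c) g = inv\<^bsub>N\<^esub> c g"
proof -
  interpret N: group N by fact
  interpret L: group "lamp N G" by (rule lamp_group) fact
  have "(inv\<^bsub>lamp N G\<^esub> c) g \<otimes>\<^bsub>N\<^esub> c g = \<one>\<^bsub>N\<^esub>"
    using assms L.l_inv[of c] by (metis lamp_mult lamp_one)
  moreover have "(inv\<^bsub>lamp N G\<^esub> c) g \<in> carrier N"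
    using assms L.inv_closed[of c] by (simp add: lamp_carrier_iff)
  ultimately show ?thesis
    using assms by (metis N.inv_equality lamp_carrier_iff)
qed

lemma lamp_csupp_inv_mult:
  assumes "group N" "c \<in> carrier (lamp N G)" "d \<in> carrier (lamp N G)"
  shows "csupp N G (inv\<^bsub>lamp N G\<^esub> c \<otimes>\<^bsub>lamp N G\<^esub> d) = disagree (carrier G) c d"
proof -
  interpret N: group N by fact
  show ?thesis
    using assms
    by (auto simp: csupp_def disagree_def lamp_mult lamp_inv_apply lamp_carrier_iff
        N.inv_solve_left')
qed

lemma (in group) mem_l_coset_iff:
  assumes "S \<subseteq> carrier G" "x \<in> carrier G"
  shows "y \<in> x <# S \<longleftrightarrow> y \<in> carrier G \<and> inv x \<otimes> y \<in> S"
  using assms by (auto simp: l_coset_def m_assoc[symmetric])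
      (metis inv_solve_left subsetD)

lemma lamp_mem_l_coset_lampL_iff:
  assumes "group N" "c \<in> carrier (lamp N G)"
  shows "d \<in> c <#\<^bsub>lamp N G\<^esub> lampL N G A
    \<longleftrightarrow> d \<in> carrier (lamp N G) \<and> disagree (carrier G) c d \<subseteq> A"
proof -
  interpret L: group "lamp N G" by (rule lamp_group) fact
  show ?thesis
    using assms L.mem_l_coset_iff[of "lampL N G A" c d]
    by (auto simp: lampL_def lamp_csupp_inv_mult)
qed

lemma disagree_image_subset_UN:
  assumes "finite F" "F \<subseteq> carrier G"
    and "c \<in> carrier (lamp N G)" "d \<in> carrier (lamp N G)"
    and "disagree (carrier G) c d \<subseteq> F"
    and single_site: "\<And>c1 c2 p. c1 \<in> carrier (lamp N G) \<Longrightarrow> c2 \<in> carrier (lamp N G) \<Longrightarrow>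
           p \<in> carrier G \<Longrightarrow> disagree (carrier G) c1 c2 \<subseteq> {p} \<Longrightarrow>
           disagree D (\<alpha> c1) (\<alpha> c2) \<subseteq> B p"
  shows "disagree D (\<alpha> c) (\<alpha> d) \<subseteq> (\<Union>p\<in>F. B p)"
  using assms(1-5)
proof (induction F arbitrary: d rule: finite_induct)
  case empty
  then have "c = d"
    by (intro lamp_eqI) (auto simp: disagree_def)
  then show ?case
    by (simp add: disagree_def)
next
  case (insert p F)
  define e where "e = d(p := c p)"
  have p: "p \<in> carrier G"
    using insert.prems by simp
  have e: "e \<in> carrier (lamp N G)"
    unfolding e_def using insert.prems p
    by (intro lamp_fun_upd_closed) (auto simp: lamp_carrier_iff)
  have "disagree (carrier G) c e \<subseteq> F"
    using insert.prems by (auto simp: disagree_def e_def)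
  then have "disagree D (\<alpha> c) (\<alpha> e) \<subseteq> (\<Union>q\<in>F. B q)"
    using insert.IH insert.prems e by simp
  moreover have "disagree D (\<alpha> e) (\<alpha> d) \<subseteq> B p"
    using insert.prems e p by (intro single_site) (auto simp: disagree_def e_def)
  ultimately show ?case
    using disagree_trans[of D "\<alpha> c" "\<alpha> d" "\<alpha> e"] by auto
qed

lemma wnbhd_eq_UN_wball: "wnbhd H S A r = (\<Union>a\<in>A. wball H S a r)"
  by (auto simp: wnbhd_def wball_def)

theorem lemma3p6:
  fixes N :: "('n, 'c) monoid_scheme" and M :: "('m, 'e) monoid_scheme"
    and G :: "('g, 'd) monoid_scheme" and H :: "('h, 'f) monoid_scheme"
    and SH :: "'h set"
    and \<alpha> :: "('g \<Rightarrow> 'n) \<Rightarrow> ('h \<Rightarrow> 'm)" and \<beta> :: "'g \<Rightarrow> 'h" and Q :: real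
  assumes "group N" "group M" "group G" "group H"
    and "finitely_generated N" "finitely_generated M" "finitely_generated G"
    and "fin_gen_set H SH"
    and "\<alpha> \<in> carrier (lamp N G) \<rightarrow> carrier (lamp M H)"
    and "\<beta> \<in> carrier G \<rightarrow> carrier H"
    and "Q \<ge> 0"
    and "\<And>c1 c2 p. c1 \<in> carrier (lamp N G) \<Longrightarrow> c2 \<in> carrier (lamp N G) \<Longrightarrow> p \<in> carrier G \<Longrightarrow>
           csupp N G (inv\<^bsub>lamp N G\<^esub> c1 \<otimes>\<^bsub>lamp N G\<^esub> c2) \<subseteq> {p} \<Longrightarrow>
           csupp M H (inv\<^bsub>lamp M H\<^esub> (\<alpha> c1) \<otimes>\<^bsub>lamp M H\<^esub> \<alpha> c2) \<subseteq> wball H SH (\<beta> p) Q"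
  shows "\<forall>A c. A \<subseteq> carrier G \<longrightarrow> finite A \<longrightarrow> c \<in> carrier (lamp N G) \<longrightarrow>
           \<alpha> ` (c <#\<^bsub>lamp N G\<^esub> lampL N G A)
             \<subseteq> \<alpha> c <#\<^bsub>lamp M H\<^esub> lampL M H (wnbhd H SH (\<beta> ` A) Q)"
proof (intro allI impI image_subsetI)
  note \<alpha> = \<open>\<alpha> \<in> carrier (lamp N G) \<rightarrow> carrier (lamp M H)\<close>
  fix A c d
  assume A: "A \<subseteq> carrier G" "finite A" and c: "c \<in> carrier (lamp N G)"
    and "d \<in> c <#\<^bsub>lamp N G\<^esub> lampL N G A"
  then have d: "d \<in> carrier (lamp N G)" and cd: "disagree (carrier G) c d \<subseteq> A"
    using lamp_mem_l_coset_lampL_iff[OF \<open>group N\<close> c] by auto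
  have single_site: "disagree (carrier H) (\<alpha> c1) (\<alpha> c2) \<subseteq> wball H SH (\<beta> p) Q"
    if "c1 \<in> carrier (lamp N G)" "c2 \<in> carrier (lamp N G)" "p \<in> carrier G"
      and "disagree (carrier G) c1 c2 \<subseteq> {p}" for c1 c2 p
    using assms(12)[OF that(1-3)] that Pi_mem[OF \<alpha> that(1)] Pi_mem[OF \<alpha> that(2)]
    by (auto simp: lamp_csupp_inv_mult[OF \<open>group N\<close>] lamp_csupp_inv_mult[OF \<open>group M\<close>])
  have "disagree (carrier H) (\<alpha> c) (\<alpha> d) \<subseteq> (\<Union>p\<in>A. wball H SH (\<beta> p) Q)"
    using disagree_image_subset_UN[OF A(2,1) c d cd single_site] .
  then have "disagree (carrier H) (\<alpha> c) (\<alpha> d) \<subseteq> wnbhd H SH (\<beta> ` A) Q"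
    by (simp add: wnbhd_eq_UN_wball image_image)
  then show "\<alpha> d \<in> \<alpha> c <#\<^bsub>lamp M H\<^esub> lampL M H (wnbhd H SH (\<beta> ` A) Q)"
    using lamp_mem_l_coset_lampL_iff[OF \<open>group M\<close> Pi_mem[OF \<alpha> c]] Pi_mem[OF \<alpha> d]
    by simp
qed

end
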